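(* Let $f=p_1\cdots p_d\in\mathbb{C}[z_1,\dots,z_n]$ be a product of $d\ge 1$ homogeneous linear polynomials $p_1,\dots,p_d$. If $\mathcal I(f)\neq\mathbb{R}^n$, then the number of distinct hyperbolicity cones of $f$ is positive and at most $2^d$ if $1\le d\le n$, and at most $2\sum_{k=0}^{n-1}\binom{d-1}{k}$ if $d>n$.
   Context: For $f\in\mathbb{C}[z_1,\dots,z_n]$, $\mathcal{V}(f)\subseteq\mathbb{C}^n$ denotes its complex zero set and the imaginary projection of $f$ is $\mathcal{I}(f)=\{\Im(\mathbf z):\mathbf z\in\mathcal V(f)\}\subseteq\mathbb{R}^n$, where $\Im$ is taken componentwise. A homogeneous polynomial $f\in\mathbb{C}[z_1,\dots,z_n]$ is hyperbolic in direction $\mathbf e\in\mathbb{R}^n$ if $f(\mathbf e)\neq 0$ and for every $\mathbf x\in\mathbb{R}^n$ the univariate polynomial $t\mapsto f(\mathbf x+t\mathbf e)$ has only real roots. In that case the hyperbolicity cone of $f$ with respect to $\mathbf e$ is $C(\mathbf e)=\{\mathbf x\in\mathbb{R}^n: f(\mathbf x+t\mathbf e)=0\Rightarrow t<0\}$. The hyperbolicity cones of $f$ are the sets $C(\mathbf e)$ for all directions $\mathbf e$ in which $f$ is hyperbolic. *)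

theory Defs
  imports "HOL-Analysis.Analysis"
begin

text \<open>Vectors in C^n and R^n are modelled as complex^'n and real^'n,
  with n = CARD('n). Polynomial functions on C^n are represented by the
  functions they induce.\<close>

definition cvec :: "real^'n \<Rightarrow> complex^'n" where
  "cvec x = (\<chi> j. complex_of_real (x $ j))"

definition imvec :: "complex^'n \<Rightarrow> real^'n" where
  "imvec z = (\<chi> j. Im (z $ j))"

text \<open>The homogeneous linear polynomial with coefficient vector a:
  z \<mapsto> a_1 z_1 + ... + a_n z_n (it is a degree-one form iff a \<noteq> 0).\<close>
definition linform :: "complex^'n \<Rightarrow> complex^'n \<Rightarrow> complex" where
  "linform a z = (\<Sum>j\<in>UNIV. a $ j * z $ j)"

definition prod_lin :: "(complex^'n) list \<Rightarrow> complex^'n \<Rightarrow> complex" where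
  "prod_lin ps z = (\<Prod>a\<leftarrow>ps. linform a z)"

definition imag_proj :: "(complex^'n \<Rightarrow> complex) \<Rightarrow> (real^'n) set" where
  "imag_proj f = {imvec z | z. f z = 0}"

definition hyperbolic :: "(complex^'n \<Rightarrow> complex) \<Rightarrow> real^'n \<Rightarrow> bool" where
  "hyperbolic f e \<longleftrightarrow> f (cvec e) \<noteq> 0 \<and>
     (\<forall>x::real^'n. \<forall>t::complex. f (cvec x + t *s cvec e) = 0 \<longrightarrow> t \<in> \<real>)"

definition hyp_cone :: "(complex^'n \<Rightarrow> complex) \<Rightarrow> real^'n \<Rightarrow> (real^'n) set" where
  "hyp_cone f e = {x. \<forall>t::real. f (cvec (x + t *\<^sub>R e)) = 0 \<longrightarrow> t < 0}"

definition hyp_cones :: "(complex^'n \<Rightarrow> complex) \<Rightarrow> (real^'n) set set" where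
  "hyp_cones f = {hyp_cone f e | e. hyperbolic f e}"

end

theory Submission
  imports Defs
begin

text \<open>If some linear factor were not a complex multiple of a real form, its zero set alone would
  already have imaginary projection \<open>\<real>\<^sup>n\<close>. So all factors are, up to nonzero scalars, real
  forms \<open>r\<^sub>1, \<dots>, r\<^sub>d\<close>. Then \<open>f\<close> is hyperbolic in direction \<open>e\<close> exactly when no \<open>r\<^sub>i \<bullet> e\<close>
  vanishes, and the hyperbolicity cone of \<open>e\<close> is the open region of the hyperplane arrangement
  \<open>{r\<^sub>i \<bullet> x = 0}\<close> containing \<open>e\<close>. Hence the cones correspond to the sign patterns realised by
  the arrangement. By deletion--restriction, the number of patterns of \<open>d\<close> forms on an
  \<open>m\<close>-dimensional space is at most \<open>R(d, m) = max_regions d m\<close>, where \<open>R(d, m) = R(d - 1, m) + R(d - 1, m - 1)\<close>,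
  and this recurrence solves to \<open>R(d, m) = 2 \<Sum>k<m. (d - 1 choose k)\<close> for \<open>d, m \<ge> 1\<close>.\<close>

definition sign_patterns :: "'a::euclidean_space set \<Rightarrow> 'a list \<Rightarrow> bool list set" where
  "sign_patterns V ls =
     {map (\<lambda>l. 0 < l \<bullet> x) ls | x. x \<in> V \<and> (\<forall>l\<in>set ls. l \<bullet> x \<noteq> 0)}"

lemma finite_sign_patterns: "finite (sign_patterns V ls)"
proof (rule finite_subset)
  show "sign_patterns V ls \<subseteq> {xs. set xs \<subseteq> UNIV \<and> length xs = length ls}"
    by (auto simp: sign_patterns_def)
qed (rule finite_lists_length_eq, simp)

lemma Cons_mem_sign_patterns_iff:
  "b # p \<in> sign_patterns V (l # ls) \<longleftrightarrow>
     (\<exists>x\<in>V. l \<bullet> x \<noteq> 0 \<and> b = (0 < l \<bullet> x) \<and> (\<forall>l'\<in>set ls. l' \<bullet> x \<noteq> 0) \<and>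
        p = map (\<lambda>l. 0 < l \<bullet> x) ls)"
  by (auto simp: sign_patterns_def)

lemma convex_comb_same_sign:
  fixes a b t :: real
  assumes "a \<noteq> 0" "b \<noteq> 0" "(0 < a) = (0 < b)" "0 < t" "t < 1"
  shows "(1 - t) * a + t * b \<noteq> 0 \<and> (0 < (1 - t) * a + t * b) = (0 < a)"
proof (cases "0 < a")
  case True
  then show ?thesis using assms by (smt (verit) mult_pos_pos)
next
  case False
  then have "(1 - t) * a < 0" "t * b < 0"
    using assms by (auto simp: mult_pos_neg)
  then show ?thesis using False by linarith
qed

lemma sign_pattern_on_hyperplane:
  assumes V: "subspace V" and "x \<in> V" "y \<in> V"
    and lx: "l \<bullet> x > 0" and ly: "l \<bullet> y < 0"
    and nx: "\<forall>l'\<in>set ls. l' \<bullet> x \<noteq> 0" and ny: "\<forall>l'\<in>set ls. l' \<bullet> y \<noteq> 0"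
    and eq: "map (\<lambda>l. 0 < l \<bullet> x) ls = map (\<lambda>l. 0 < l \<bullet> y) ls"
  shows "map (\<lambda>l. 0 < l \<bullet> x) ls \<in> sign_patterns (V \<inter> {x. l \<bullet> x = 0}) ls"
proof -
  define t where "t = (l \<bullet> x) / (l \<bullet> x - l \<bullet> y)"
  have t: "0 < t" "t < 1" using lx ly by (auto simp: t_def field_simps)
  define z where "z = (1 - t) *\<^sub>R x + t *\<^sub>R y"
  have inner_z: "l' \<bullet> z = (1 - t) * (l' \<bullet> x) + t * (l' \<bullet> y)" for l'
    by (simp add: z_def inner_simps)
  have "z \<in> V" unfolding z_def using V \<open>x \<in> V\<close> \<open>y \<in> V\<close>
    by (simp add: subspace_add subspace_scale)
  moreover have "l \<bullet> z = 0"
    using lx ly by (simp add: inner_z t_def field_simps)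
  moreover have same: "l' \<bullet> z \<noteq> 0 \<and> (0 < l' \<bullet> z) = (0 < l' \<bullet> x)" if "l' \<in> set ls" for l'
    using convex_comb_same_sign[of "l' \<bullet> x" "l' \<bullet> y" t] nx ny eq that t
    by (auto simp: inner_z map_eq_conv)
  moreover have "map (\<lambda>l. 0 < l \<bullet> x) ls = map (\<lambda>l. 0 < l \<bullet> z) ls"
    using same by (auto simp: map_eq_conv)
  ultimately show ?thesis unfolding sign_patterns_def by blast
qed

text \<open>A pattern extends by both signs of \<open>l\<close> only if it is realised on both sides of the
  hyperplane \<open>l \<bullet> x = 0\<close>, hence on the hyperplane itself.\<close>
lemma card_sign_patterns_Cons_le:
  assumes V: "subspace V"
  shows "card (sign_patterns V (l # ls)) \<le>
    card (sign_patterns V ls) + card (sign_patterns (V \<inter> {x. l \<bullet> x = 0}) ls)"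
proof -
  define P where "P = sign_patterns V (l # ls)"
  define A where "A = {p. True # p \<in> P}"
  define B where "B = {p. False # p \<in> P}"
  have AB_V: "A \<subseteq> sign_patterns V ls" "B \<subseteq> sign_patterns V ls"
    by (auto simp: A_def B_def P_def sign_patterns_def)
  have AB_W: "A \<inter> B \<subseteq> sign_patterns (V \<inter> {x. l \<bullet> x = 0}) ls"
  proof
    fix p assume "p \<in> A \<inter> B"
    then have "True # p \<in> P" "False # p \<in> P" by (auto simp: A_def B_def)
    obtain x where x: "x \<in> V" "l \<bullet> x > 0" "\<forall>l'\<in>set ls. l' \<bullet> x \<noteq> 0"
        and p_x: "p = map (\<lambda>l. 0 < l \<bullet> x) ls"
      using \<open>True # p \<in> P\<close> unfolding P_def Cons_mem_sign_patterns_iff by auto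
    obtain y where y: "y \<in> V" "l \<bullet> y < 0" "\<forall>l'\<in>set ls. l' \<bullet> y \<noteq> 0"
        and p_y: "p = map (\<lambda>l. 0 < l \<bullet> y) ls"
      using \<open>False # p \<in> P\<close> unfolding P_def Cons_mem_sign_patterns_iff
      by (auto simp: not_less_iff_gr_or_eq)
    show "p \<in> sign_patterns (V \<inter> {x. l \<bullet> x = 0}) ls"
      unfolding p_x
      using sign_pattern_on_hyperplane[OF V x(1) y(1) x(2) y(2) x(3) y(3)] p_x p_y by argo
  qed
  have fin: "finite A" "finite B"
    using AB_V finite_sign_patterns finite_subset by blast+
  have "P \<subseteq> Cons True ` A \<union> Cons False ` B"
  proof
    fix q assume "q \<in> P"
    then obtain b p where "q = b # p" unfolding P_def sign_patterns_def by auto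
    then show "q \<in> Cons True ` A \<union> Cons False ` B"
      using \<open>q \<in> P\<close> by (cases b) (auto simp: A_def B_def)
  qed
  then have "card P \<le> card (Cons True ` A \<union> Cons False ` B)"
    using fin by (intro card_mono) auto
  also have "\<dots> \<le> card (Cons True ` A) + card (Cons False ` B)" by (rule card_Un_le)
  also have "\<dots> = card (A \<union> B) + card (A \<inter> B)"
    using card_Un_Int[OF fin] by (simp add: card_image)
  also have "\<dots> \<le> card (sign_patterns V ls) + card (sign_patterns (V \<inter> {x. l \<bullet> x = 0}) ls)"
    using AB_V AB_W by (intro add_mono card_mono finite_sign_patterns) auto
  finally show ?thesis by (simp add: P_def)
qed

fun max_regions :: "nat \<Rightarrow> nat \<Rightarrow> nat" where
  "max_regions 0 m = 1"
| "max_regions (Suc d) 0 = 0"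
| "max_regions (Suc d) (Suc m) = max_regions d (Suc m) + max_regions d m"

lemma card_sign_patterns_le:
  fixes ls :: "'a::euclidean_space list"
  assumes "subspace V" "dim V \<le> m"
  shows "card (sign_patterns V ls) \<le> max_regions (length ls) m"
  using assms
proof (induction ls arbitrary: V m)
  case Nil
  have "sign_patterns V [] \<subseteq> {[]}" by (auto simp: sign_patterns_def)
  then have "card (sign_patterns V []) \<le> card {[] :: bool list}" by (intro card_mono) auto
  then show ?case by simp
next
  case (Cons l ls)
  show ?case
  proof (cases "\<exists>x\<in>V. l \<bullet> x \<noteq> 0")
    case False
    then have "sign_patterns V (l # ls) = {}" by (auto simp: sign_patterns_def)
    then show ?thesis by simp
  next
    case True
    then obtain x0 where x0: "x0 \<in> V" "l \<bullet> x0 \<noteq> 0" by blast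
    obtain m' where m: "m = Suc m'"
    proof (cases m)
      case 0
      then have "V \<subseteq> {0}" using Cons.prems by simp
      then show ?thesis using x0 by auto
    qed
    define W where "W = V \<inter> {x. l \<bullet> x = 0}"
    have W: "subspace W" unfolding W_def using Cons.prems(1)
      by (simp add: subspace_inter subspace_hyperplane)
    have "W \<subset> V" using x0 by (auto simp: W_def)
    moreover have "span W = W" "span V = V"
      using W Cons.prems(1) by (simp_all add: span_eq_iff)
    ultimately have "dim W < dim V" by (metis dim_psubset)
    then have dim_W: "dim W \<le> m'" using Cons.prems(2) m by simp
    have "card (sign_patterns V (l # ls)) \<le> card (sign_patterns V ls) + card (sign_patterns W ls)"
      unfolding W_def by (rule card_sign_patterns_Cons_le[OF Cons.prems(1)])
    also have "\<dots> \<le> max_regions (length ls) m + max_regions (length ls) m'"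
      using Cons.IH[OF Cons.prems] Cons.IH[OF W dim_W] by simp
    finally show ?thesis by (simp add: m)
  qed
qed

lemma sum_choose_Suc:
  "(\<Sum>k=0..Suc m. Suc d choose k) = (\<Sum>k=0..Suc m. d choose k) + (\<Sum>k=0..m. d choose k)"
proof (induction m)
  case 0
  then show ?case by (simp add: numeral_2_eq_2)
next
  case (Suc m)
  then show ?case by simp
qed

lemma sum_choose_eq_power:
  assumes "d \<le> m"
  shows "(\<Sum>k=0..m. d choose k) = 2 ^ d"
proof -
  have "(\<Sum>k=0..m. d choose k) = (\<Sum>k\<le>d. d choose k)"
    using assms by (subst atLeast0AtMost, intro sum.mono_neutral_right) auto
  then show ?thesis by (simp add: choose_row_sum)
qed

lemma max_regions_Suc_Suc: "max_regions (Suc d) (Suc m) = 2 * (\<Sum>k=0..m. d choose k)"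
proof (induction d arbitrary: m)
  case 0
  then show ?case using sum_choose_eq_power[of 0] by (cases m) auto
next
  case (Suc d)
  show ?case
  proof (cases m)
    case 0
    then show ?thesis using Suc.IH by simp
  next
    case (Suc m')
    have "max_regions (Suc (Suc d)) (Suc m) = max_regions (Suc d) (Suc m) + max_regions (Suc d) m"
      by simp
    also have "\<dots> = 2 * (\<Sum>k=0..Suc m'. d choose k) + 2 * (\<Sum>k=0..m'. d choose k)"
      using Suc.IH[of m] Suc.IH[of m'] Suc by simp
    also have "\<dots> = 2 * (\<Sum>k=0..Suc m'. Suc d choose k)"
      by (simp only: sum_choose_Suc distrib_left)
    finally show ?thesis using Suc by simp
  qed
qed

lemma max_regions_closed_form:
  assumes "d \<ge> 1" "m \<ge> 1"
  shows "max_regions d m =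
    (if d \<le> m then 2 ^ d else 2 * (\<Sum>k = 0..m - 1. (d - 1) choose k))"
proof -
  obtain d' m' where "d = Suc d'" "m = Suc m'"
    using assms by (metis Suc_le_D One_nat_def)
  then show ?thesis
    using max_regions_Suc_Suc[of d' m'] sum_choose_eq_power[of d' m'] by simp
qed

lemma exists_off_hyperplanes:
  fixes ls :: "'a::real_inner list"
  assumes "\<forall>l\<in>set ls. l \<noteq> 0"
  shows "\<exists>e. \<forall>l\<in>set ls. l \<bullet> e \<noteq> 0"
  using assms
proof (induction ls)
  case Nil
  then show ?case by simp
next
  case (Cons l ls)
  then obtain e where e: "\<forall>l'\<in>set ls. l' \<bullet> e \<noteq> 0" by auto
  have "l \<noteq> 0" using Cons.prems by simp
  text \<open>Move \<open>e\<close> along \<open>l\<close>, avoiding the finitely many parameters that hit a hyperplane.\<close>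
  define bad where "bad = (\<lambda>l'. -(l' \<bullet> e) / (l' \<bullet> l)) ` set (l # ls)"
  have "finite bad" by (simp add: bad_def)
  then obtain s where s: "s \<notin> bad"
    using ex_new_if_finite[OF infinite_UNIV_char_0] by blast
  have "l' \<bullet> (e + s *\<^sub>R l) \<noteq> 0" if "l' \<in> set (l # ls)" for l'
  proof
    assume "l' \<bullet> (e + s *\<^sub>R l) = 0"
    then have h: "l' \<bullet> e + s * (l' \<bullet> l) = 0" by (simp add: inner_simps)
    show False
    proof (cases "l' \<bullet> l = 0")
      case True
      then show False using h e that \<open>l \<noteq> 0\<close> by auto
    next
      case False
      then have "s = -(l' \<bullet> e) / (l' \<bullet> l)" using h by (simp add: field_simps)
      then have "s \<in> bad" unfolding bad_def using that by (rule image_eqI)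
      then show False using s by contradiction
    qed
  qed
  then show ?case by blast
qed

lemma exists_inner_eq_pair:
  fixes u v :: "'a::real_inner"
  assumes "u \<noteq> 0" and not_parallel: "\<forall>k. v \<noteq> k *\<^sub>R u"
  shows "\<exists>x. u \<bullet> x = \<alpha> \<and> v \<bullet> x = \<beta>"
proof -
  define w where "w = v - ((v \<bullet> u) / (u \<bullet> u)) *\<^sub>R u"
  have uu: "u \<bullet> u \<noteq> 0" using \<open>u \<noteq> 0\<close> by simp
  have ww: "w \<bullet> w \<noteq> 0"
  proof
    assume "w \<bullet> w = 0"
    then have "v = ((v \<bullet> u) / (u \<bullet> u)) *\<^sub>R u" by (simp add: w_def)
    with not_parallel show False by blast
  qed
  have uw: "u \<bullet> w = 0" using uu by (simp add: w_def inner_simps inner_commute)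
  have "v \<bullet> w = (w + ((v \<bullet> u) / (u \<bullet> u)) *\<^sub>R u) \<bullet> w" by (simp add: w_def)
  then have vw: "v \<bullet> w = w \<bullet> w" using uw by (simp add: inner_simps)
  define s where "s = \<alpha> / (u \<bullet> u)"
  define x where "x = s *\<^sub>R u + ((\<beta> - s * (v \<bullet> u)) / (w \<bullet> w)) *\<^sub>R w"
  have "u \<bullet> x = \<alpha>" using uu uw by (simp add: x_def s_def inner_simps)
  moreover have "v \<bullet> x = \<beta>" using ww vw
    by (simp add: x_def inner_simps inner_commute[of v u])
  ultimately show ?thesis by blast
qed

lemma linform_scale: "linform (c *s a) z = c * linform a z"
  by (simp add: linform_def sum_distrib_left mult.assoc)

lemma linform_cvec: "linform (cvec r) (cvec y) = complex_of_real (r \<bullet> y)"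
  by (simp add: linform_def cvec_def inner_vec_def)

lemma linform_cvec_line:
  "linform (cvec r) (cvec x + t *s cvec e) =
     complex_of_real (r \<bullet> x) + t * complex_of_real (r \<bullet> e)"
  by (simp add: linform_def cvec_def inner_vec_def distrib_left sum.distrib
      sum_distrib_left algebra_simps)

text \<open>Writing \<open>a = u + i v\<close> with real \<open>u, v\<close>, the point \<open>z = x + i y\<close> is a zero iff
  \<open>u \<bullet> x = v \<bullet> y\<close> and \<open>v \<bullet> x = - u \<bullet> y\<close>, solvable for every \<open>y\<close> unless \<open>u, v\<close> are parallel.\<close>
lemma exists_zero_of_linform_with_imvec:
  fixes a :: "complex^'n"
  assumes not_real: "\<not> (\<exists>c r. c \<noteq> 0 \<and> a = c *s cvec r)"
  shows "\<exists>z. linform a z = 0 \<and> imvec z = y"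
proof -
  define u where "u = (\<chi> j. Re (a $ j))"
  define v where "v = (\<chi> j. Im (a $ j))"
  have u0: "u \<noteq> 0"
  proof
    assume "u = 0"
    then have "a = \<i> *s cvec v"
      by (simp add: vec_eq_iff u_def v_def cvec_def complex_eq_iff)
    moreover have "\<i> \<noteq> 0" by simp
    ultimately show False using not_real by blast
  qed
  have not_parallel: "\<forall>k. v \<noteq> k *\<^sub>R u"
  proof (intro allI notI)
    fix k assume "v = k *\<^sub>R u"
    then have "a = (1 + \<i> * complex_of_real k) *s cvec u"
      by (simp add: vec_eq_iff u_def v_def cvec_def complex_eq_iff)
    moreover have "1 + \<i> * complex_of_real k \<noteq> 0" by (simp add: complex_eq_iff)
    ultimately show False using not_real by blast
  qed
  obtain x where x: "u \<bullet> x = v \<bullet> y" "v \<bullet> x = - (u \<bullet> y)"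
    using exists_inner_eq_pair[OF u0 not_parallel] by blast
  define z where "z = cvec x + \<i> *s cvec y"
  have "Re (linform a z) = u \<bullet> x - v \<bullet> y"
    by (simp add: linform_def z_def cvec_def u_def v_def inner_vec_def Re_sum sum_subtractf)
  moreover have "Im (linform a z) = v \<bullet> x + u \<bullet> y"
    by (simp add: linform_def z_def cvec_def u_def v_def inner_vec_def Im_sum sum.distrib
        algebra_simps)
  ultimately have "linform a z = 0" using x by (simp add: complex_eq_iff)
  moreover have "imvec z = y" by (simp add: vec_eq_iff imvec_def z_def cvec_def)
  ultimately show ?thesis by blast
qed

lemma prod_lin_eq_0_iff: "prod_lin ps z = 0 \<longleftrightarrow> (\<exists>a\<in>set ps. linform a z = 0)"
  by (force simp: prod_lin_def prod_list_zero_iff)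

lemma real_factors_if_imag_proj_ne_UNIV:
  assumes "\<forall>a\<in>set ps. a \<noteq> 0" and "imag_proj (prod_lin ps) \<noteq> UNIV"
  obtains rs where "length rs = length ps" "\<forall>r\<in>set rs. r \<noteq> 0"
    "\<And>z. prod_lin ps z = 0 \<longleftrightarrow> prod_lin (map cvec rs) z = 0"
proof -
  obtain y where y: "y \<notin> imag_proj (prod_lin ps)" using assms(2) by blast
  have "\<exists>c r. c \<noteq> 0 \<and> a = c *s cvec r" if "a \<in> set ps" for a
    using exists_zero_of_linform_with_imvec[of a y] y that
    by (auto simp: imag_proj_def prod_lin_eq_0_iff)
  then obtain c r where cr: "\<And>a. a \<in> set ps \<Longrightarrow> c a \<noteq> 0 \<and> a = c a *s cvec (r a)"
    by metis
  show ?thesis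
  proof
    show "length (map r ps) = length ps" by simp
    show "\<forall>r'\<in>set (map r ps). r' \<noteq> 0"
      using cr assms(1) by (force simp: vec_eq_iff cvec_def)
    have "linform a z = 0 \<longleftrightarrow> linform (cvec (r a)) z = 0" if "a \<in> set ps" for a z
      using cr[OF that] linform_scale by (metis mult_eq_0_iff)
    then show "prod_lin ps z = 0 \<longleftrightarrow> prod_lin (map cvec (map r ps)) z = 0" for z
      by (auto simp: prod_lin_eq_0_iff)
  qed
qed

lemma hyp_cones_cong:
  assumes "\<And>z. f z = 0 \<longleftrightarrow> g z = 0"
  shows "hyp_cones f = hyp_cones g"
proof -
  have "hyperbolic f = hyperbolic g" "hyp_cone f = hyp_cone g"
    using assms by (simp_all add: fun_eq_iff hyperbolic_def hyp_cone_def)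
  then show ?thesis by (simp add: hyp_cones_def)
qed

definition sign_region :: "'a::real_inner list \<Rightarrow> bool list \<Rightarrow> 'a set" where
  "sign_region rs p = {x. (\<forall>r\<in>set rs. r \<bullet> x \<noteq> 0) \<and> map (\<lambda>r. 0 < r \<bullet> x) rs = p}"

lemma hyperbolic_real_prod_iff:
  "hyperbolic (prod_lin (map cvec rs)) e \<longleftrightarrow> (\<forall>r\<in>set rs. r \<bullet> e \<noteq> 0)"
proof -
  have "t \<in> \<real>" if "r \<bullet> e \<noteq> 0"
      and "complex_of_real (r \<bullet> x) + t * complex_of_real (r \<bullet> e) = 0" for r x t
  proof -
    from that have "t = complex_of_real (- (r \<bullet> x) / (r \<bullet> e))"
      by (simp add: field_simps add_eq_0_iff)
    then show ?thesis by simp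
  qed
  then show ?thesis
    by (auto simp: hyperbolic_def prod_lin_eq_0_iff linform_cvec linform_cvec_line)
qed

lemma hyp_cone_real_prod:
  assumes e: "\<forall>r\<in>set rs. r \<bullet> e \<noteq> 0"
  shows "hyp_cone (prod_lin (map cvec rs)) e = sign_region rs (map (\<lambda>r. 0 < r \<bullet> e) rs)"
proof -
  text \<open>Along the line \<open>x + t e\<close> the form \<open>r\<close> vanishes only at \<open>t = - (r \<bullet> x) / (r \<bullet> e)\<close>, which
    is negative iff \<open>r \<bullet> x\<close> and \<open>r \<bullet> e\<close> have the same sign.\<close>
  have root: "r \<bullet> (x + t *\<^sub>R e) = 0 \<longleftrightarrow> t = - (r \<bullet> x) / (r \<bullet> e)" if "r \<in> set rs" for r x t
    using e that by (auto simp: inner_simps field_simps)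
  have "x \<in> hyp_cone (prod_lin (map cvec rs)) e \<longleftrightarrow>
      (\<forall>r\<in>set rs. - (r \<bullet> x) / (r \<bullet> e) < 0)" for x
    by (auto simp: hyp_cone_def prod_lin_eq_0_iff linform_cvec root)
  moreover have "- (r \<bullet> x) / (r \<bullet> e) < 0 \<longleftrightarrow> r \<bullet> x \<noteq> 0 \<and> (0 < r \<bullet> x) = (0 < r \<bullet> e)"
    if "r \<in> set rs" for r x
    using e that by (auto simp: neg_divide_less_eq zero_less_divide_iff)
  ultimately show ?thesis
    by (auto simp: sign_region_def map_eq_conv)
qed

lemma hyp_cones_real_prod:
  "hyp_cones (prod_lin (map cvec rs)) = sign_region rs ` sign_patterns UNIV rs"
proof -
  have "hyp_cones (prod_lin (map cvec rs)) =
      hyp_cone (prod_lin (map cvec rs)) ` {e. \<forall>r\<in>set rs. r \<bullet> e \<noteq> 0}"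
    by (auto simp: hyp_cones_def hyperbolic_real_prod_iff)
  also have "\<dots> =
      (\<lambda>e. sign_region rs (map (\<lambda>r. 0 < r \<bullet> e) rs)) ` {e. \<forall>r\<in>set rs. r \<bullet> e \<noteq> 0}"
    by (rule image_cong) (simp_all add: hyp_cone_real_prod)
  also have "\<dots> = sign_region rs ` sign_patterns UNIV rs"
    by (auto simp: sign_patterns_def)
  finally show ?thesis .
qed

theorem lemma3p1:
  fixes ps :: "(complex^'n) list"
  assumes "length ps \<ge> 1"
    and "\<forall>a\<in>set ps. a \<noteq> 0"
    and "imag_proj (prod_lin ps) \<noteq> UNIV"
  shows "finite (hyp_cones (prod_lin ps)) \<and> card (hyp_cones (prod_lin ps)) > 0 \<and>
    card (hyp_cones (prod_lin ps)) \<le>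
      (if length ps \<le> CARD('n) then 2 ^ length ps
       else 2 * (\<Sum>k = 0..CARD('n) - 1. (length ps - 1) choose k))"
proof -
  obtain rs :: "(real^'n) list" where rs: "length rs = length ps" "\<forall>r\<in>set rs. r \<noteq> 0"
    and zeros: "\<And>z. prod_lin ps z = 0 \<longleftrightarrow> prod_lin (map cvec rs) z = 0"
    using real_factors_if_imag_proj_ne_UNIV[OF assms(2,3)] by blast
  have "hyp_cones (prod_lin ps) = hyp_cones (prod_lin (map cvec rs))"
    by (rule hyp_cones_cong) (rule zeros)
  then have cones: "hyp_cones (prod_lin ps) = sign_region rs ` sign_patterns UNIV rs"
    by (simp add: hyp_cones_real_prod)
  have "finite (hyp_cones (prod_lin ps))"
    by (simp add: cones finite_sign_patterns)
  moreover obtain e where "\<forall>r\<in>set rs. r \<bullet> e \<noteq> 0"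
    using exists_off_hyperplanes[OF rs(2)] by blast
  then have "hyp_cones (prod_lin ps) \<noteq> {}"
    by (auto simp: cones sign_patterns_def)
  moreover have "card (hyp_cones (prod_lin ps)) \<le> max_regions (length ps) CARD('n)"
  proof -
    have "card (hyp_cones (prod_lin ps)) \<le> card (sign_patterns UNIV rs)"
      unfolding cones by (rule card_image_le[OF finite_sign_patterns])
    also have "\<dots> \<le> max_regions (length ps) CARD('n)"
      using card_sign_patterns_le[of UNIV "CARD('n)" rs] rs(1) by simp
    finally show ?thesis .
  qed
  ultimately show ?thesis
    using max_regions_closed_form[OF assms(1), of "CARD('n)"] by (simp add: card_gt_0_iff)
qed

end
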